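(* For all $n,m\ge1$, $$F_n(x,y,q)F_{n+m-1}(xq,yq,q)-F_{n-1}(xq,yq,q)F_{n+m}(x,y,q)=(-y)^nq^{\binom n2}F_{m-1}(xq^{n+1},yq^{n+1},q).$$
   Context: $F_n(x,y,q)=\sum_{\pi}x^{s(\pi)}y^{d(\pi)}q^{rb(\pi)}$, where: - $\pi$ ranges over layered matchings of $[n]$, i.e. set partitions whose blocks are consecutive intervals $[1,i_1]/\dots/[i_{k-1}+1,n]$ of size $1$ or $2$; - $s(\pi)$ and $d(\pi)$ are the numbers of blocks of size $1$ and $2$; - for $\pi=B_1/\dots/B_k$ with $\min B_1<\dots<\min B_k$, $rb(\pi)$ is the number of pairs $(b,B_j)$ with $b\in B_i$, $j>i$, $\max B_j>b$. Equivalently, $F_0=1$, $F_1=x$, and $F_n=xq^{n-1}F_{n-1}+yq^{n-2}F_{n-2}$ for $n\ge2$. $F_n(xq^a,yq^a,q)$ denotes the substitution $x\mapsto xq^a$, $y\mapsto yq^a$. *)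

theory Defs
  imports Main
begin

fun F :: "nat \<Rightarrow> 'a::comm_ring_1 \<Rightarrow> 'a \<Rightarrow> 'a \<Rightarrow> 'a" where
  "F 0 x y q = 1"
| "F (Suc 0) x y q = x"
| "F (Suc (Suc n)) x y q = x * q ^ (Suc n) * F (Suc n) x y q + y * q ^ n * F n x y q"

end

theory Submission
  imports Defs
begin

(* The recursion defining F removes the LAST block of a layered matching.
   The proof rests on the dual decomposition by the FIRST block:
     F_(k+2)(x,y) = x F_(k+1)(xq,yq) + y F_k(xq^2,yq^2),
   since after a first block of size 1 (resp. 2) every later pair
   (b, B_j) gains one (resp. two) extra crossing with the first block,
   which is exactly the substitution x,y := xq,yq (resp. xq^2,yq^2).
   Writing D_n(x,y) for the left-hand side of the corollary, expanding
   F_(n+1)(x,y) and F_(n+m+1)(x,y) by the first-block decomposition gives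
   D_(n+1)(x,y) = -y D_n(xq,yq), a telescoping identity; the base case
   D_1 is the first-block decomposition itself.  Iterating produces the
   factor (-y)^n q^(0+1+...+(n-1)) = (-y)^n q^(n choose 2). *)

lemma F_first_block:
  fixes x y q :: "'a::comm_ring_1"
  shows "F (Suc (Suc k)) x y q = x * F (Suc k) (x * q) (y * q) q + y * F k (x * q^2) (y * q^2) q"
proof (induction k x y q rule: F.induct)
  case (1 x y q)
  show ?case by (simp add: power2_eq_square)
next
  case (2 x y q)
  show ?case by (simp add: algebra_simps power2_eq_square)
next
  case (3 k x y q)
  let ?u = "x * q" and ?v = "y * q" and ?u2 = "x * q^2" and ?v2 = "y * q^2"
  have "F (Suc (Suc (Suc (Suc k)))) x y q
        = x * q ^ Suc (Suc (Suc k)) * F (Suc (Suc (Suc k))) x y q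
          + y * q ^ Suc (Suc k) * F (Suc (Suc k)) x y q"
    by simp
  also have "\<dots> = x * q ^ Suc (Suc (Suc k)) * (x * F (Suc (Suc k)) ?u ?v q + y * F (Suc k) ?u2 ?v2 q)
                 + y * q ^ Suc (Suc k) * (x * F (Suc k) ?u ?v q + y * F k ?u2 ?v2 q)"
    using "3.IH" by simp
  also have "\<dots> = x * (?u * q ^ Suc (Suc k) * F (Suc (Suc k)) ?u ?v q + ?v * q ^ Suc k * F (Suc k) ?u ?v q)
                 + y * (?u2 * q ^ Suc k * F (Suc k) ?u2 ?v2 q + ?v2 * q ^ k * F k ?u2 ?v2 q)"
    by (simp add: algebra_simps power2_eq_square)
  also have "\<dots> = x * F (Suc (Suc (Suc k))) ?u ?v q + y * F (Suc (Suc k)) ?u2 ?v2 q"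
    by simp
  finally show ?case .
qed

lemma F_shifted_determinant:
  fixes x y q :: "'a::comm_ring_1"
  shows "F (Suc k) x y q * F (k + Suc j) (x * q) (y * q) q
           - F k (x * q) (y * q) q * F (Suc k + Suc j) x y q
         = (- y) ^ Suc k * q ^ (Suc k choose 2) * F j (x * q ^ (k + 2)) (y * q ^ (k + 2)) q"
proof (induction k arbitrary: x y)
  case 0
  show ?case using F_first_block[of j x y q] by (simp add: algebra_simps power2_eq_square choose_two)
next
  case (Suc k)
  let ?u = "x * q" and ?v = "y * q" and ?u2 = "x * q^2" and ?v2 = "y * q^2"
  have IH: "F (Suc k) ?u ?v q * F (k + Suc j) ?u2 ?v2 q - F k ?u2 ?v2 q * F (Suc k + Suc j) ?u ?v q
         = (- ?v) ^ Suc k * q ^ (Suc k choose 2) * F j (x * q ^ (k + 3)) (y * q ^ (k + 3)) q"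
  proof -
    have shift: "?u * q = ?u2" "?v * q = ?v2"
      "?u * q ^ (k + 2) = x * q ^ (k + 3)" "?v * q ^ (k + 2) = y * q ^ (k + 3)"
      by (simp_all add: power2_eq_square numeral_3_eq_3 algebra_simps)
    show ?thesis using Suc.IH[of ?u ?v] unfolding shift .
  qed
  have first: "F (Suc (Suc k)) x y q = x * F (Suc k) ?u ?v q + y * F k ?u2 ?v2 q"
    by (rule F_first_block)
  have last: "F (Suc (Suc k) + Suc j) x y q
              = x * F (Suc k + Suc j) ?u ?v q + y * F (k + Suc j) ?u2 ?v2 q"
    using F_first_block[of "k + Suc j" x y q] by simp
  have choose_step: "Suc (Suc k) choose 2 = Suc k + (Suc k choose 2)"
    by (simp add: choose_two)
  have "F (Suc (Suc k)) x y q * F (Suc k + Suc j) ?u ?v q - F (Suc k) ?u ?v q * F (Suc (Suc k) + Suc j) x y q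
        = - y * (F (Suc k) ?u ?v q * F (k + Suc j) ?u2 ?v2 q - F k ?u2 ?v2 q * F (Suc k + Suc j) ?u ?v q)"
    unfolding first last by (simp add: algebra_simps)
  also have "\<dots> = - y * ((- ?v) ^ Suc k * q ^ (Suc k choose 2) * F j (x * q ^ (k + 3)) (y * q ^ (k + 3)) q)"
    by (simp only: IH)
  also have "\<dots> = (- y) ^ Suc (Suc k) * q ^ (Suc (Suc k) choose 2) * F j (x * q ^ (k + 3)) (y * q ^ (k + 3)) q"
  proof -
    have "(- ?v) ^ Suc k = q ^ Suc k * (- y) ^ Suc k"
      by (metis mult.commute mult_minus_left power_mult_distrib)
    then show ?thesis unfolding choose_step by (simp add: power_add algebra_simps)
  qed
  finally show ?case by (simp add: numeral_3_eq_3)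
qed

theorem corollary5p5:
  fixes x y q :: "'a::comm_ring_1" and n m :: nat
  assumes "n \<ge> 1" and "m \<ge> 1"
  shows "F n x y q * F (n + m - 1) (x * q) (y * q) q
           - F (n - 1) (x * q) (y * q) q * F (n + m) x y q
         = (- y) ^ n * q ^ (n choose 2) * F (m - 1) (x * q ^ (n + 1)) (y * q ^ (n + 1)) q"
proof -
  obtain k where k: "n = Suc k" using assms(1) by (cases n) auto
  obtain j where j: "m = Suc j" using assms(2) by (cases m) auto
  show ?thesis using F_shifted_determinant[of k x y q j] unfolding k j by simp
qed

end
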